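(* Let $n\ge 1$. Consider any circuit topology on $n$ qubits built from one-qubit rotation gates (each carrying one real angle parameter), fixed gates, and parameterized Mølmer–Sørensen gates (each carrying one real parameter), and let $f:\mathbb{R}^k\to\mathcal{U}(2^n)$ be the smooth map sending the parameters to the implemented unitary. If for every unit vector $\ket{\psi}\in\mathbb{C}^{2^n}$ there exists $x\in\mathbb{R}^k$ with $f(x)\ket{0}^{\otimes n}=\ket{\psi}$ up to a global phase (i.e. the topology can prepare every $n$-qubit quantum state from $\ket{0\cdots0}$), then the number of MS gates in the topology is at least $$\left\lceil \frac{2^{n+1}-2n-2}{2n+1}\right\rceil .$$ *)

theory Defs
  imports Complex_Main "Jordan_Normal_Form.Matrix"
begin

text \<open>Qubit circuits on n qubits. Basis states of (C^2)^{\<otimes>n} are indexed by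
  r < 2^n; qubit q of basis state r is bit q of r.\<close>

definition qbit :: "nat \<Rightarrow> nat \<Rightarrow> nat" where
  "qbit r q = (r div 2 ^ q) mod 2"

datatype pauli = PX | PY | PZ

text \<open>One-qubit rotation R_P(theta) = exp(-i theta P / 2) as a 2x2 matrix.\<close>
definition rot2 :: "pauli \<Rightarrow> real \<Rightarrow> complex mat" where
  "rot2 P t = (case P of
      PX \<Rightarrow> mat 2 2 (\<lambda>(i,j). if i = j then complex_of_real (cos (t/2))
                            else - \<i> * complex_of_real (sin (t/2)))
    | PY \<Rightarrow> mat 2 2 (\<lambda>(i,j). if i = j then complex_of_real (cos (t/2))
                            else if i = 0 then - complex_of_real (sin (t/2))
                            else complex_of_real (sin (t/2)))
    | PZ \<Rightarrow> mat 2 2 (\<lambda>(i,j). if i \<noteq> j then 0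
                            else if i = 0 then cis (- t/2) else cis (t/2)))"

definition adj2 :: "complex mat \<Rightarrow> complex mat" where
  "adj2 U = mat (dim_col U) (dim_row U) (\<lambda>(i,j). cnj (U $$ (j,i)))"

definition unitary2 :: "complex mat \<Rightarrow> bool" where
  "unitary2 U \<longleftrightarrow> U \<in> carrier_mat 2 2 \<and> U * adj2 U = 1\<^sub>m 2"

definition on_qubit :: "nat \<Rightarrow> nat \<Rightarrow> complex mat \<Rightarrow> complex mat" where
  "on_qubit n q U = mat (2^n) (2^n) (\<lambda>(r,c).
      if (\<forall>i. i \<noteq> q \<longrightarrow> qbit r i = qbit c i) then U $$ (qbit r q, qbit c q) else 0)"

text \<open>Parameterized Moelmer-Soerensen gate on qubits a, b:
  MS(theta) = exp(-i theta X_a X_b / 2) = cos(theta/2) I - i sin(theta/2) X_a X_b.\<close>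
definition ms_gate :: "nat \<Rightarrow> nat \<Rightarrow> nat \<Rightarrow> real \<Rightarrow> complex mat" where
  "ms_gate n a b t = mat (2^n) (2^n) (\<lambda>(r,c).
      if r = c then complex_of_real (cos (t/2))
      else if (\<forall>i. qbit r i \<noteq> qbit c i \<longleftrightarrow> i = a \<or> i = b)
        then - \<i> * complex_of_real (sin (t/2)) else 0)"

datatype gate = Rot pauli nat | Fixed "complex mat" nat | MS nat nat

definition wf_gate :: "nat \<Rightarrow> gate \<Rightarrow> bool" where
  "wf_gate n g = (case g of
      Rot P q \<Rightarrow> q < n
    | Fixed U q \<Rightarrow> q < n \<and> unitary2 U
    | MS a b \<Rightarrow> a < n \<and> b < n \<and> a \<noteq> b)"

fun is_param :: "gate \<Rightarrow> bool" where
  "is_param (Rot _ _) = True"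
| "is_param (Fixed _ _) = False"
| "is_param (MS _ _) = True"

fun is_ms :: "gate \<Rightarrow> bool" where
  "is_ms (MS _ _) = True"
| "is_ms _ = False"

definition num_params :: "gate list \<Rightarrow> nat" where
  "num_params gs = length (filter is_param gs)"

definition num_ms :: "gate list \<Rightarrow> nat" where
  "num_ms gs = length (filter is_ms gs)"

text \<open>The implemented unitary f(x): gates are applied in list order (the first
  gate acts first), parameters are consumed in order from the list x.\<close>
fun circ :: "nat \<Rightarrow> gate list \<Rightarrow> real list \<Rightarrow> complex mat" where
  "circ n [] xs = 1\<^sub>m (2^n)"
| "circ n (Rot P q # gs) xs = circ n gs (tl xs) * on_qubit n q (rot2 P (hd xs))"
| "circ n (Fixed U q # gs) xs = circ n gs xs * on_qubit n q U"
| "circ n (MS a b # gs) xs = circ n gs (tl xs) * ms_gate n a b (hd xs)"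

definition unit_state :: "nat \<Rightarrow> complex vec \<Rightarrow> bool" where
  "unit_state n \<psi> \<longleftrightarrow> dim_vec \<psi> = 2^n \<and> (\<Sum>i<2^n. (cmod (\<psi> $ i))\<^sup>2) = 1"

end

theory Submission
  imports Defs "HOL-Library.FuncSet"
begin

text \<open>Up to a global phase, every state that a topology with m MS gates prepares from
  |0...0> is the value of one fixed expression in 2n + 7m angles: a one-qubit gate commutes back
  through the circuit until it is absorbed either into the initial product state (two angles per
  qubit) or into one of the two SU(2) rotations placed after each MS gate (seven angles per MS gate,
  counting its own). Adjoining a radius and a phase gives a Lipschitz map from 2n + 7m + 2 angles
  onto the unit ball of C^(2^n) = R^(2^(n+1)), and a grid-counting argument shows that a Lipschitz
  image of a box of lower dimension contains no cube. Hence 2n + 7m + 2 \<ge> 2^(n+1), which implies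
  the bound since 7 \<le> 2n + 1 as soon as m > 0.\<close>


section \<open>Bits of basis indices\<close>

lemma qbit_eq_if_bit: "qbit r i = (if bit r i then 1 else 0)"
  by (simp add: qbit_def bit_iff_odd odd_iff_mod_2_eq_one)

lemma qbit_le_1: "qbit r i \<le> 1"
  by (simp add: qbit_eq_if_bit)

lemma qbits_eq_iff: "(\<forall>i. qbit r i = qbit c i) \<longleftrightarrow> r = c"
  by (auto intro: bit_eqI simp: qbit_eq_if_bit split: if_splits)

lemma less_power_iff_high_bits: "(x::nat) < 2 ^ n \<longleftrightarrow> (\<forall>i\<ge>n. \<not> bit x i)"
proof -
  have "take_bit n x = x \<longleftrightarrow> (\<forall>i\<ge>n. \<not> bit x i)"
  proof
    assume "take_bit n x = x"
    then show "\<forall>i\<ge>n. \<not> bit x i"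
      by (metis bit_take_bit_iff linorder_not_le)
  next
    assume "\<forall>i\<ge>n. \<not> bit x i"
    then show "take_bit n x = x"
      by (intro bit_eqI) (auto simp: bit_take_bit_iff not_le)
  qed
  then show ?thesis by (simp add: take_bit_nat_eq_self_iff)
qed

lemma set_bit_less_power: "(r::nat) < 2^n \<Longrightarrow> q < n \<Longrightarrow> set_bit q r < 2^n"
  by (auto simp: less_power_iff_high_bits bit_set_bit_iff)

lemma unset_bit_less_power: "(r::nat) < 2^n \<Longrightarrow> unset_bit q r < 2^n"
  by (auto simp: less_power_iff_high_bits bit_unset_bit_iff)

lemma flip_bit_less_power: "(r::nat) < 2^n \<Longrightarrow> q < n \<Longrightarrow> flip_bit q r < 2^n"
  by (auto simp: less_power_iff_high_bits bit_flip_bit_iff)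

lemma qbit_set_bit: "qbit (set_bit q (r::nat)) i = (if i = q then 1 else qbit r i)"
  by (auto simp: qbit_eq_if_bit bit_set_bit_iff)

lemma qbit_unset_bit: "qbit (unset_bit q (r::nat)) i = (if i = q then 0 else qbit r i)"
  by (auto simp: qbit_eq_if_bit bit_unset_bit_iff)

lemma qbit_flip_bit: "qbit (flip_bit q (r::nat)) i = (if i = q then 1 - qbit r i else qbit r i)"
  by (auto simp: qbit_eq_if_bit bit_flip_bit_iff)

lemma unset_bit_neq_set_bit: "unset_bit q (r::nat) \<noteq> set_bit q r"
  by (metis qbit_set_bit qbit_unset_bit zero_neq_one)

lemma unset_bit_eq_self: "qbit r q = 0 \<Longrightarrow> unset_bit q (r::nat) = r"
  by (rule bit_eqI) (auto simp: bit_unset_bit_iff qbit_eq_if_bit split: if_splits)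

lemma set_bit_eq_self: "qbit r q = 1 \<Longrightarrow> set_bit q (r::nat) = r"
  by (rule bit_eqI) (auto simp: bit_set_bit_iff qbit_eq_if_bit split: if_splits)

lemma set_unset_bit_same:
  fixes r :: nat
  shows "unset_bit q (unset_bit q r) = unset_bit q r" "set_bit q (unset_bit q r) = set_bit q r"
    "unset_bit q (set_bit q r) = unset_bit q r" "set_bit q (set_bit q r) = set_bit q r"
  by (auto intro!: bit_eqI simp: bit_set_bit_iff bit_unset_bit_iff)

lemma set_unset_bit_commute:
  fixes r :: nat
  assumes "p \<noteq> q"
  shows "unset_bit p (unset_bit q r) = unset_bit q (unset_bit p r)"
    "unset_bit p (set_bit q r) = set_bit q (unset_bit p r)"
    "set_bit p (set_bit q r) = set_bit q (set_bit p r)"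
  using assms by (auto intro!: bit_eqI simp: bit_set_bit_iff bit_unset_bit_iff)

definition flip_pair :: "nat \<Rightarrow> nat \<Rightarrow> nat \<Rightarrow> nat" where
  "flip_pair a b r = flip_bit a (flip_bit b r)"

lemma qbit_flip_pair:
  "a \<noteq> b \<Longrightarrow> qbit (flip_pair a b r) i = (if i = a \<or> i = b then 1 - qbit r i else qbit r i)"
  by (auto simp: flip_pair_def qbit_flip_bit)

lemma flip_pair_less_power: "r < 2^n \<Longrightarrow> a < n \<Longrightarrow> b < n \<Longrightarrow> flip_pair a b r < 2^n"
  by (simp add: flip_pair_def flip_bit_less_power)

lemma flip_pair_outside:
  fixes r :: nat
  assumes "q \<noteq> a" "q \<noteq> b"
  shows "qbit (flip_pair a b r) q = qbit r q"
    "unset_bit q (flip_pair a b r) = flip_pair a b (unset_bit q r)"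
    "set_bit q (flip_pair a b r) = flip_pair a b (set_bit q r)"
  using assms
  by (auto intro!: bit_eqI simp: qbit_eq_if_bit flip_pair_def bit_set_bit_iff bit_unset_bit_iff bit_flip_bit_iff)

lemma agree_off_qubit_eq:
  assumes "r < 2^n" "q < n"
  shows "{c. c < 2^n \<and> (\<forall>i. i \<noteq> q \<longrightarrow> qbit r i = qbit c i)} = {unset_bit q r, set_bit q r}"
proof (intro equalityI subsetI)
  fix c assume "c \<in> {c. c < 2^n \<and> (\<forall>i. i \<noteq> q \<longrightarrow> qbit r i = qbit c i)}"
  then have agree: "\<forall>i. i \<noteq> q \<longrightarrow> qbit r i = qbit c i" by auto
  show "c \<in> {unset_bit q r, set_bit q r}"
  proof (cases "qbit c q = 0")
    case True
    then have "\<forall>i. qbit (unset_bit q r) i = qbit c i" using agree by (auto simp: qbit_unset_bit)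
    then show ?thesis by (simp add: qbits_eq_iff)
  next
    case False
    then have "qbit c q = 1" using qbit_le_1[of c q] by linarith
    then have "\<forall>i. qbit (set_bit q r) i = qbit c i" using agree by (auto simp: qbit_set_bit)
    then show ?thesis by (simp add: qbits_eq_iff)
  qed
next
  fix c assume "c \<in> {unset_bit q r, set_bit q r}"
  then show "c \<in> {c. c < 2^n \<and> (\<forall>i. i \<noteq> q \<longrightarrow> qbit r i = qbit c i)}"
    using assms by (auto simp: qbit_set_bit qbit_unset_bit set_bit_less_power unset_bit_less_power)
qed

lemma differ_exactly_at_pair_eq:
  assumes "r < 2^n" "a < n" "b < n" "a \<noteq> b"
  shows "{c. c < 2^n \<and> c \<noteq> r \<and> (\<forall>i. qbit r i \<noteq> qbit c i \<longleftrightarrow> i = a \<or> i = b)} = {flip_pair a b r}"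
proof -
  have pointwise: "(qbit r i \<noteq> qbit c i \<longleftrightarrow> i = a \<or> i = b) \<longleftrightarrow> qbit (flip_pair a b r) i = qbit c i"
    for c i using assms(4) by (auto simp: qbit_eq_if_bit flip_pair_def bit_flip_bit_iff)
  have "(\<forall>i. qbit r i \<noteq> qbit c i \<longleftrightarrow> i = a \<or> i = b) \<longleftrightarrow> flip_pair a b r = c" for c
    by (simp only: pointwise qbits_eq_iff)
  moreover have "flip_pair a b r \<noteq> r"
    using qbit_flip_pair[OF assms(4), of r a] by (auto simp: qbit_eq_if_bit split: if_splits)
  ultimately show ?thesis using assms by (auto simp: flip_pair_less_power)
qed


section \<open>Gates as operators on amplitude functions\<close>

type_synonym amplitudes = "nat \<Rightarrow> complex"
type_synonym mat2 = "nat \<Rightarrow> nat \<Rightarrow> complex"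

definition apply_1q :: "nat \<Rightarrow> mat2 \<Rightarrow> amplitudes \<Rightarrow> amplitudes" where
  "apply_1q q A w r = A (qbit r q) 0 * w (unset_bit q r) + A (qbit r q) 1 * w (set_bit q r)"

definition apply_ms :: "nat \<Rightarrow> nat \<Rightarrow> real \<Rightarrow> amplitudes \<Rightarrow> amplitudes" where
  "apply_ms a b t w r = complex_of_real (cos t) * w r - \<i> * complex_of_real (sin t) * w (flip_pair a b r)"

lemma sum_if_two_points:
  assumes "finite S" "{c\<in>S. P c} = {x, y}" "x \<noteq> y"
  shows "(\<Sum>c\<in>S. if P c then f c else 0) = f x + f y"
proof -
  have "(\<Sum>c\<in>S. if P c then f c else 0) = (\<Sum>c\<in>{c\<in>S. P c}. f c)"
    using assms(1) by (simp add: sum.inter_filter)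
  also have "\<dots> = f x + f y" using assms(2,3) by simp
  finally show ?thesis .
qed

lemma on_qubit_mult_vec:
  assumes "q < n" "dim_vec v = 2^n"
  shows "on_qubit n q U *\<^sub>v v = vec (2^n) (apply_1q q (\<lambda>i j. U $$ (i,j)) (($) v))"
proof (rule eq_vecI)
  fix r assume "r < dim_vec (vec (2^n) (apply_1q q (\<lambda>i j. U $$ (i,j)) (($) v)))"
  then have r: "r < 2^n" by simp
  have "(on_qubit n q U *\<^sub>v v) $ r = (\<Sum>c\<in>{0..<2^n}.
      if \<forall>i. i \<noteq> q \<longrightarrow> qbit r i = qbit c i then U $$ (qbit r q, qbit c q) * v $ c else 0)"
    using r assms by (auto simp: on_qubit_def scalar_prod_def intro!: sum.cong)
  also have "\<dots> = U $$ (qbit r q, qbit (unset_bit q r) q) * v $ unset_bit q r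
                 + U $$ (qbit r q, qbit (set_bit q r) q) * v $ set_bit q r"
    by (rule sum_if_two_points) (use agree_off_qubit_eq[OF r assms(1)] unset_bit_neq_set_bit in auto)
  finally show "(on_qubit n q U *\<^sub>v v) $ r = vec (2^n) (apply_1q q (\<lambda>i j. U $$ (i,j)) (($) v)) $ r"
    using r by (simp add: apply_1q_def qbit_set_bit qbit_unset_bit)
qed (simp add: on_qubit_def)

lemma ms_gate_mult_vec:
  assumes "a < n" "b < n" "a \<noteq> b" "dim_vec v = 2^n"
  shows "ms_gate n a b t *\<^sub>v v = vec (2^n) (apply_ms a b (t/2) (($) v))"
proof (rule eq_vecI)
  fix r assume "r < dim_vec (vec (2^n) (apply_ms a b (t/2) (($) v)))"
  then have r: "r < 2^n" by simp
  let ?P = "\<lambda>c. c \<noteq> r \<and> (\<forall>i. qbit r i \<noteq> qbit c i \<longleftrightarrow> i = a \<or> i = b)"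
  have "(ms_gate n a b t *\<^sub>v v) $ r = (\<Sum>c\<in>{0..<2^n}. (if c = r then cos (t/2) * v $ c else 0)
      + (if ?P c then - \<i> * sin (t/2) * v $ c else 0))"
    using r assms by (auto simp: ms_gate_def scalar_prod_def intro!: sum.cong)
  also have "\<dots> = cos (t/2) * v $ r + (\<Sum>c\<in>{0..<2^n}. if ?P c then - \<i> * sin (t/2) * v $ c else 0)"
    using r by (simp add: sum.distrib)
  also have "(\<Sum>c\<in>{0..<2^n}. if ?P c then - \<i> * sin (t/2) * v $ c else 0)
      = (\<Sum>c\<in>{c\<in>{0..<2^n}. ?P c}. - \<i> * sin (t/2) * v $ c)"
    by (rule sum.inter_filter[symmetric]) simp
  also have "{c\<in>{0..<2^n}. ?P c} = {flip_pair a b r}"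
    using differ_exactly_at_pair_eq[OF r assms(1-3)] by auto
  finally show "(ms_gate n a b t *\<^sub>v v) $ r = vec (2^n) (apply_ms a b (t/2) (($) v)) $ r"
    using r by (simp add: apply_ms_def)
qed (simp add: ms_gate_def)

lemma on_qubit_carrier: "on_qubit n q U \<in> carrier_mat (2^n) (2^n)"
  by (simp add: on_qubit_def)

lemma ms_gate_carrier: "ms_gate n a b t \<in> carrier_mat (2^n) (2^n)"
  by (simp add: ms_gate_def)

lemma circ_carrier: "circ n gs xs \<in> carrier_mat (2^n) (2^n)"
  by (induction n gs xs rule: circ.induct) (auto simp: on_qubit_carrier ms_gate_carrier)

lemma apply_1q_vec_index:
  "q < n \<Longrightarrow> vec (2^n) (apply_1q q A (($) (vec (2^n) f))) = vec (2^n) (apply_1q q A f)"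
  by (rule eq_vecI) (auto simp: apply_1q_def set_bit_less_power unset_bit_less_power)

lemma apply_ms_vec_index:
  "a < n \<Longrightarrow> b < n \<Longrightarrow> vec (2^n) (apply_ms a b t (($) (vec (2^n) f))) = vec (2^n) (apply_ms a b t f)"
  by (rule eq_vecI) (auto simp: apply_ms_def flip_pair_less_power)

definition mat2_mult :: "mat2 \<Rightarrow> mat2 \<Rightarrow> mat2" where
  "mat2_mult A B i j = A i 0 * B 0 j + A i 1 * B 1 j"

lemma apply_1q_apply_1q: "apply_1q q A (apply_1q q B w) = apply_1q q (mat2_mult A B) w"
  by (rule ext) (simp add: apply_1q_def mat2_mult_def qbit_set_bit qbit_unset_bit set_unset_bit_same algebra_simps)

lemma apply_1q_commute: "p \<noteq> q \<Longrightarrow> apply_1q q A (apply_1q p B w) = apply_1q p B (apply_1q q A w)"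
  by (rule ext) (simp add: apply_1q_def qbit_set_bit qbit_unset_bit set_unset_bit_commute algebra_simps)

lemma apply_1q_apply_ms_commute:
  "q \<noteq> a \<Longrightarrow> q \<noteq> b \<Longrightarrow> apply_1q q A (apply_ms a b t w) = apply_ms a b t (apply_1q q A w)"
  by (rule ext) (simp add: apply_1q_def apply_ms_def flip_pair_outside algebra_simps)

lemma apply_1q_cong: "(\<forall>i\<le>1. \<forall>j\<le>1. A i j = B i j) \<Longrightarrow> apply_1q q A w = apply_1q q B w"
  using qbit_le_1 by (auto simp: apply_1q_def fun_eq_iff)

lemma apply_1q_scale_matrix: "apply_1q q (\<lambda>i j. c * A i j) w = (\<lambda>r. c * apply_1q q A w r)"
  by (rule ext) (simp add: apply_1q_def algebra_simps)

lemma apply_1q_scale: "apply_1q q A (\<lambda>r. c * w r) = (\<lambda>r. c * apply_1q q A w r)"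
  by (rule ext) (simp add: apply_1q_def algebra_simps)

lemma apply_ms_scale: "apply_ms a b t (\<lambda>r. c * w r) = (\<lambda>r. c * apply_ms a b t w r)"
  by (rule ext) (simp add: apply_ms_def algebra_simps)


section \<open>One-qubit unitaries modulo a phase\<close>

definition unit_pair :: "complex \<Rightarrow> complex \<Rightarrow> bool" where
  "unit_pair a b \<longleftrightarrow> a * cnj a + b * cnj b = 1"

definition su2 :: "complex \<Rightarrow> complex \<Rightarrow> mat2" where
  "su2 a b i j = (if i = 0 then (if j = 0 then a else b) else (if j = 0 then - cnj b else cnj a))"

definition unitary_rows :: "mat2 \<Rightarrow> bool" where
  "unitary_rows U \<longleftrightarrow> U 0 0 * cnj (U 0 0) + U 0 1 * cnj (U 0 1) = 1 \<and>
                     U 1 0 * cnj (U 1 0) + U 1 1 * cnj (U 1 1) = 1 \<and>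
                     U 0 0 * cnj (U 1 0) + U 0 1 * cnj (U 1 1) = 0"

lemma unit_pair_iff_norms: "unit_pair a b \<longleftrightarrow> (cmod a)\<^sup>2 + (cmod b)\<^sup>2 = 1"
proof -
  have "a * cnj a + b * cnj b = complex_of_real ((cmod a)\<^sup>2 + (cmod b)\<^sup>2)"
    by (simp only: of_real_add complex_norm_square)
  then show ?thesis by (metis of_real_eq_1_iff unit_pair_def)
qed

lemma cmod_eq_1_iff_mult_cnj: "cmod z = 1 \<longleftrightarrow> z * cnj z = 1"
proof -
  have "z * cnj z = complex_of_real ((cmod z)\<^sup>2)" by (rule complex_norm_square[symmetric])
  moreover have "(cmod z)\<^sup>2 = 1 \<longleftrightarrow> cmod z = 1" unfolding power2_eq_1_iff using norm_ge_zero[of z] by linarith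
  ultimately show ?thesis by (metis of_real_eq_1_iff)
qed

lemma unitary_rows_second_row:
  assumes "unitary_rows U"
  defines "l \<equiv> U 0 0 * U 1 1 - U 0 1 * U 1 0"
  shows "U 1 0 = - l * cnj (U 0 1)" "U 1 1 = l * cnj (U 0 0)" "cmod l = 1"
proof -
  define a b c d where "a = U 0 0" "b = U 0 1" "c = U 1 0" "d = U 1 1"
  have r1: "a * cnj a + b * cnj b = 1" and r2: "c * cnj c + d * cnj d = 1"
    and "a * cnj c + b * cnj d = 0"
    using assms(1) by (auto simp: unitary_rows_def a_b_c_d_def)
  then have "cnj (a * cnj c + b * cnj d) = 0" by simp
  then have r3: "c * cnj a + d * cnj b = 0" by (simp add: mult.commute)
  have l: "l = a * d - b * c" by (simp add: l_def a_b_c_d_def)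
  have "- l * cnj b = c * (a * cnj a + b * cnj b) - a * (c * cnj a + d * cnj b)"
    by (simp add: l algebra_simps)
  then show hc: "U 1 0 = - l * cnj (U 0 1)" using r1 r3 by (simp add: a_b_c_d_def)
  have "l * cnj a = d * (a * cnj a + b * cnj b) - b * (c * cnj a + d * cnj b)"
    by (simp add: l algebra_simps)
  then show hd: "U 1 1 = l * cnj (U 0 0)" using r1 r3 by (simp add: a_b_c_d_def)
  have "c * cnj c + d * cnj d = (l * cnj l) * (a * cnj a + b * cnj b)"
    using hc hd by (simp add: a_b_c_d_def algebra_simps)
  then show "cmod l = 1" using r1 r2 by (simp add: cmod_eq_1_iff_mult_cnj)
qed

lemma unitary_rows_eq_phase_su2:
  assumes "unitary_rows U"
  obtains \<mu> a b where "cmod \<mu> = 1" "unit_pair a b" "\<forall>i\<le>1. \<forall>j\<le>1. U i j = \<mu> * su2 a b i j"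
proof -
  define l where "l = U 0 0 * U 1 1 - U 0 1 * U 1 0"
  note row2 = unitary_rows_second_row[OF assms, folded l_def]
  define \<mu> where "\<mu> = cis (Arg l / 2)"
  have \<mu>: "\<mu> * cnj \<mu> = 1" by (simp add: \<mu>_def cis_cnj cis_mult)
  have "l \<noteq> 0" using row2(3) by auto
  then have \<mu>\<mu>: "\<mu> * \<mu> = l" using row2(3) by (simp add: \<mu>_def cis_mult cis_Arg sgn_div_norm)
  define a b where "a = U 0 0 * cnj \<mu>" "b = U 0 1 * cnj \<mu>"
  have "unit_pair a b"
  proof -
    have "a * cnj a + b * cnj b = (U 0 0 * cnj (U 0 0) + U 0 1 * cnj (U 0 1)) * (\<mu> * cnj \<mu>)"
      by (simp add: a_b_def algebra_simps)
    then show ?thesis using assms \<mu> by (simp add: unit_pair_def unitary_rows_def)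
  qed
  moreover have "U i j = \<mu> * su2 a b i j" if "i \<le> 1" "j \<le> 1" for i j
  proof -
    have "\<mu> * a = U 0 0 * (\<mu> * cnj \<mu>)" "\<mu> * b = U 0 1 * (\<mu> * cnj \<mu>)"
      "\<mu> * - cnj b = - (\<mu> * \<mu>) * cnj (U 0 1)" "\<mu> * cnj a = (\<mu> * \<mu>) * cnj (U 0 0)"
      by (simp_all add: a_b_def ac_simps)
    moreover have "i = 0 \<or> i = 1" "j = 0 \<or> j = 1" using that by auto
    ultimately show ?thesis using \<mu> \<mu>\<mu> row2(1,2) by (auto simp: su2_def)
  qed
  moreover have "cmod \<mu> = 1" by (simp add: \<mu>_def)
  ultimately show ?thesis using that by blast
qed

lemma mat2_mult_phase_su2:
  assumes "\<forall>i\<le>1. \<forall>j\<le>1. U i j = \<mu> * su2 a1 b1 i j" "i \<le> 1" "j \<le> 1"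
  shows "mat2_mult U (su2 a b) i j = \<mu> * su2 (a1 * a - b1 * cnj b) (a1 * b + b1 * cnj a) i j"
proof -
  have "i = 0 \<or> i = 1" "j = 0 \<or> j = 1" using assms(2,3) by auto
  then show ?thesis using assms(1) by (auto simp: mat2_mult_def su2_def algebra_simps)
qed

lemma unit_pair_su2_mult:
  assumes "unit_pair a1 b1" "unit_pair a b"
  shows "unit_pair (a1 * a - b1 * cnj b) (a1 * b + b1 * cnj a)"
proof -
  have "(a1 * a - b1 * cnj b) * cnj (a1 * a - b1 * cnj b) + (a1 * b + b1 * cnj a) * cnj (a1 * b + b1 * cnj a)
      = (a1 * cnj a1 + b1 * cnj b1) * (a * cnj a + b * cnj b)"
    by (simp add: algebra_simps)
  then show ?thesis using assms by (simp add: unit_pair_def)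
qed

lemma unit_pair_phase_su2_apply:
  assumes "\<forall>i\<le>1. \<forall>j\<le>1. U i j = \<mu> * su2 a1 b1 i j" "cmod \<mu> = 1" "unit_pair a1 b1" "unit_pair p s"
  shows "unit_pair (U 0 0 * p + U 0 1 * s) (U 1 0 * p + U 1 1 * s)"
proof -
  have "(U 0 0 * p + U 0 1 * s) * cnj (U 0 0 * p + U 0 1 * s) + (U 1 0 * p + U 1 1 * s) * cnj (U 1 0 * p + U 1 1 * s)
    = (\<mu> * cnj \<mu>) * ((a1 * cnj a1 + b1 * cnj b1) * (p * cnj p + s * cnj s))"
    using assms(1) by (simp add: su2_def algebra_simps)
  then show ?thesis using assms by (simp add: unit_pair_def cmod_eq_1_iff_mult_cnj)
qed

lemma abs_Arg_le_pi: "\<bar>Arg z\<bar> \<le> pi"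
  using Arg_bounded[of z] by auto

lemma unit_pair_polar:
  assumes "unit_pair a b"
  obtains t u v where "\<bar>t\<bar> \<le> pi" "\<bar>u\<bar> \<le> pi" "\<bar>v\<bar> \<le> pi"
    "a = complex_of_real (cos t) * cis u" "b = complex_of_real (sin t) * cis v"
proof -
  have norms: "(cmod a)\<^sup>2 + (cmod b)\<^sup>2 = 1" using assms by (simp add: unit_pair_iff_norms)
  then have a1: "cmod a \<le> 1"
    by (metis abs_norm_cancel abs_square_le_1 le_add_same_cancel1 zero_le_power2)
  define t where "t = arccos (cmod a)"
  have "-1 \<le> cmod a" by (rule order_trans[of _ 0]) auto
  then have t: "0 \<le> t" "t \<le> pi" "cos t = cmod a" "sin t = sqrt (1 - (cmod a)\<^sup>2)"
    using a1 by (auto simp: t_def arccos_lbound arccos_ubound cos_arccos sin_arccos)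
  have "1 - (cmod a)\<^sup>2 = (cmod b)\<^sup>2" using norms by simp
  then have "sin t = cmod b" using t(4) by simp
  then have "a = complex_of_real (cos t) * cis (Arg a)" "b = complex_of_real (sin t) * cis (Arg b)"
    using t(3) by (metis rcis_cmod_Arg rcis_def)+
  then show ?thesis using that[of t "Arg a" "Arg b"] t(1,2) abs_Arg_le_pi by auto
qed

lemma Arg_cis_cis: "cis (Arg (cis s)) = cis s"
  by (simp add: cis_Arg sgn_div_norm)

lemma unit_pair_polar_phase:
  assumes "unit_pair a b"
  obtains c t v where "cmod c = 1" "\<bar>t\<bar> \<le> pi" "\<bar>v\<bar> \<le> pi"
    "a = c * complex_of_real (cos t)" "b = c * (complex_of_real (sin t) * cis v)"
proof -
  obtain t u v where h: "\<bar>t\<bar> \<le> pi" "a = complex_of_real (cos t) * cis u" "b = complex_of_real (sin t) * cis v"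
    using unit_pair_polar[OF assms] .
  have "b = cis u * (complex_of_real (sin t) * cis (Arg (cis (v - u))))"
    using h(3) by (simp add: Arg_cis_cis cis_mult)
  then show ?thesis
    using that[of "cis u" t "Arg (cis (v - u))"] h(1,2) abs_Arg_le_pi by (simp add: mult.commute)
qed

definition su2_angles :: "real \<Rightarrow> real \<Rightarrow> real \<Rightarrow> mat2" where
  "su2_angles t u v = su2 (complex_of_real (cos t) * cis u) (complex_of_real (sin t) * cis v)"

lemma unit_pair_cos_sin: "unit_pair (complex_of_real (cos t) * cis u) (complex_of_real (sin t) * cis v)"
  by (simp add: unit_pair_iff_norms norm_mult)

lemma unitary_rows_rot2: "unitary_rows (\<lambda>i j. rot2 P t $$ (i,j))"
proof -
  have cs: "complex_of_real (cos s) * complex_of_real (cos s) + complex_of_real (sin s) * complex_of_real (sin s) = 1" for s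
    by (metis of_real_1 of_real_add of_real_mult sin_cos_squared_add3)
  show ?thesis
    using cs[of "t/2"] by (cases P) (simp_all add: unitary_rows_def rot2_def cis_cnj cis_mult algebra_simps)
qed

lemma unitary_rows_unitary2:
  assumes "unitary2 U"
  shows "unitary_rows (\<lambda>i j. U $$ (i,j))"
proof -
  have U: "U \<in> carrier_mat 2 2" and e: "U * adj2 U = 1\<^sub>m 2" using assms by (auto simp: unitary2_def)
  have entry: "(U * adj2 U) $$ (i,k) = U $$ (i,0) * cnj (U $$ (k,0)) + U $$ (i,1) * cnj (U $$ (k,1))"
    if "i < 2" "k < 2" for i k
    using U that by (simp add: adj2_def scalar_prod_def numeral_2_eq_2)
  show ?thesis using entry[of 0 0] entry[of 1 1] entry[of 0 1] e by (simp add: unitary_rows_def)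
qed


section \<open>A normal form for the states a topology prepares\<close>

definition qubit_amp :: "(nat \<Rightarrow> real) \<Rightarrow> nat \<Rightarrow> nat \<Rightarrow> complex" where
  "qubit_amp x i k = (if k = 0 then complex_of_real (cos (x (2*i)))
                      else complex_of_real (sin (x (2*i))) * cis (x (2*i+1)))"

definition product_state :: "nat \<Rightarrow> (nat \<Rightarrow> real) \<Rightarrow> amplitudes" where
  "product_state n x r = (\<Prod>i<n. qubit_amp x i (qbit r i))"

text \<open>The list of MS gates is stored most recent first. Angles 0 to 2n-1 describe a product state;
  the MS gate with k earlier MS gates owns the 7 angles from 2n + 7k on: its own angle, then
  three for an SU(2) rotation of each of its qubits.\<close>
fun normal_form :: "nat \<Rightarrow> (nat \<times> nat) list \<Rightarrow> (nat \<Rightarrow> real) \<Rightarrow> amplitudes" where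
  "normal_form n [] x = product_state n x"
| "normal_form n ((a,b)#ps) x =
     apply_1q a (su2_angles (x (2*n+7*length ps+1)) (x (2*n+7*length ps+2)) (x (2*n+7*length ps+3)))
      (apply_1q b (su2_angles (x (2*n+7*length ps+4)) (x (2*n+7*length ps+5)) (x (2*n+7*length ps+6)))
        (apply_ms a b (x (2*n+7*length ps)) (normal_form n ps x)))"

definition angles_bounded :: "(nat \<Rightarrow> real) \<Rightarrow> bool" where
  "angles_bounded x \<longleftrightarrow> (\<forall>j. \<bar>x j\<bar> \<le> pi)"

definition valid_pairs :: "nat \<Rightarrow> (nat \<times> nat) list \<Rightarrow> bool" where
  "valid_pairs n ps \<longleftrightarrow> (\<forall>(a,b)\<in>set ps. a < n \<and> b < n \<and> a \<noteq> b)"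

lemma unit_pair_qubit_amp: "unit_pair (qubit_amp x i 0) (qubit_amp x i 1)"
  using unit_pair_cos_sin[of "x (2*i)" 0 "x (2*i+1)"] by (simp add: qubit_amp_def)

lemma normal_form_cong: "(\<forall>j < 2*n + 7*length ps. x j = y j) \<Longrightarrow> normal_form n ps x = normal_form n ps y"
proof (induction ps)
  case Nil
  then have "qubit_amp x i = qubit_amp y i" if "i < n" for i
    using that by (simp add: qubit_amp_def fun_eq_iff)
  then show ?case by (auto simp: product_state_def fun_eq_iff intro!: prod.cong)
next
  case (Cons p ps)
  have "normal_form n ps x = normal_form n ps y" using Cons by simp
  moreover have block: "x (2*n + 7*length ps + k) = y (2*n + 7*length ps + k)" if "k \<le> 6" for k
    using Cons.prems that by auto
  ultimately show ?case
    using block[of 0] block[of 1] block[of 2] block[of 3] block[of 4] block[of 5] block[of 6]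
    by (cases p) (simp add: numeral_eq_Suc)
qed

lemma product_state_split:
  "q < n \<Longrightarrow> product_state n x r = qubit_amp x q (qbit r q) * (\<Prod>i\<in>{..<n}-{q}. qubit_amp x i (qbit r i))"
  unfolding product_state_def by (subst prod.remove[of _ q]) auto

lemma apply_1q_su2_angles_zero: "apply_1q q (su2_angles 0 0 0) w = w"
proof
  fix r
  show "apply_1q q (su2_angles 0 0 0) w r = w r"
  proof (cases "qbit r q = 0")
    case True
    then show ?thesis by (simp add: apply_1q_def su2_angles_def su2_def unset_bit_eq_self)
  next
    case False
    then have "qbit r q = 1" using qbit_le_1[of r q] by linarith
    then show ?thesis by (simp add: apply_1q_def su2_angles_def su2_def set_bit_eq_self)
  qed
qed

lemma apply_1q_absorb:
  assumes "unitary_rows U"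
  obtains \<mu> t u v where "cmod \<mu> = 1" "\<bar>t\<bar> \<le> pi" "\<bar>u\<bar> \<le> pi" "\<bar>v\<bar> \<le> pi"
    "\<And>w. apply_1q q U (apply_1q q (su2_angles t' u' v') w) = (\<lambda>r. \<mu> * apply_1q q (su2_angles t u v) w r)"
proof -
  obtain \<mu> a1 b1 where U: "cmod \<mu> = 1" "unit_pair a1 b1" "\<forall>i\<le>1. \<forall>j\<le>1. U i j = \<mu> * su2 a1 b1 i j"
    using unitary_rows_eq_phase_su2[OF assms] .
  define \<alpha> \<beta> where "\<alpha> = complex_of_real (cos t') * cis u'" "\<beta> = complex_of_real (sin t') * cis v'"
  have "unit_pair (a1 * \<alpha> - b1 * cnj \<beta>) (a1 * \<beta> + b1 * cnj \<alpha>)"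
    using unit_pair_su2_mult[OF U(2) unit_pair_cos_sin] by (simp add: \<alpha>_\<beta>_def)
  then obtain t u v where tuv: "\<bar>t\<bar> \<le> pi" "\<bar>u\<bar> \<le> pi" "\<bar>v\<bar> \<le> pi"
    "a1 * \<alpha> - b1 * cnj \<beta> = complex_of_real (cos t) * cis u"
    "a1 * \<beta> + b1 * cnj \<alpha> = complex_of_real (sin t) * cis v"
    by (rule unit_pair_polar)
  have "apply_1q q U (apply_1q q (su2_angles t' u' v') w) = (\<lambda>r. \<mu> * apply_1q q (su2_angles t u v) w r)" for w
  proof -
    have "apply_1q q U (apply_1q q (su2_angles t' u' v') w) = apply_1q q (mat2_mult U (su2 \<alpha> \<beta>)) w"
      by (simp add: apply_1q_apply_1q su2_angles_def \<alpha>_\<beta>_def)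
    also have "\<dots> = apply_1q q (\<lambda>i j. \<mu> * su2_angles t u v i j) w"
      by (rule apply_1q_cong) (use mat2_mult_phase_su2[OF U(3)] tuv(4,5) in \<open>simp add: su2_angles_def\<close>)
    finally show ?thesis by (simp only: apply_1q_scale_matrix)
  qed
  then show ?thesis using that U(1) tuv(1-3) by blast
qed

lemma apply_1q_product_state:
  assumes "q < n" "unitary_rows U" "angles_bounded x"
  obtains c x' where "cmod c = 1" "angles_bounded x'"
    "apply_1q q U (product_state n x) = (\<lambda>r. c * product_state n x' r)"
proof -
  obtain \<mu> a1 b1 where U: "cmod \<mu> = 1" "unit_pair a1 b1" "\<forall>i\<le>1. \<forall>j\<le>1. U i j = \<mu> * su2 a1 b1 i j"
    using unitary_rows_eq_phase_su2[OF assms(2)] .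
  define y where "y k = U k 0 * qubit_amp x q 0 + U k 1 * qubit_amp x q 1" for k
  have "unit_pair (y 0) (y 1)"
    unfolding y_def by (rule unit_pair_phase_su2_apply[OF U(3,1,2) unit_pair_qubit_amp])
  then obtain c t v where ctv: "cmod c = 1" "\<bar>t\<bar> \<le> pi" "\<bar>v\<bar> \<le> pi"
     "y 0 = c * complex_of_real (cos t)" "y 1 = c * (complex_of_real (sin t) * cis v)"
    by (rule unit_pair_polar_phase)
  define x' where "x' = x(2*q := t, 2*q+1 := v)"
  have other: "qubit_amp x' i = qubit_amp x i" if "i \<noteq> q" for i
    using that by (auto simp: qubit_amp_def x'_def fun_eq_iff)
  have y: "y k = c * qubit_amp x' q k" if "k \<le> 1" for k
    using that ctv(4,5) by (cases k) (auto simp: qubit_amp_def x'_def)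
  define R where "R x r = (\<Prod>i\<in>{..<n}-{q}. qubit_amp x i (qbit r i))" for x r
  have R_bit: "R x (unset_bit q r) = R x r" "R x (set_bit q r) = R x r" for x r
    unfolding R_def by (auto simp: qbit_set_bit qbit_unset_bit intro!: prod.cong)
  have "apply_1q q U (product_state n x) r = c * product_state n x' r" for r
  proof -
    have "apply_1q q U (product_state n x) r = y (qbit r q) * R x r"
      by (simp add: apply_1q_def product_state_split[OF assms(1)] R_def[symmetric] R_bit
                    qbit_set_bit qbit_unset_bit y_def algebra_simps)
    also have "\<dots> = c * (qubit_amp x' q (qbit r q) * R x' r)"
      using y[OF qbit_le_1] other by (simp add: R_def)
    finally show ?thesis by (simp add: product_state_split[OF assms(1)] R_def)
  qed
  moreover have "angles_bounded x'" using assms(3) ctv(2,3) by (auto simp: angles_bounded_def x'_def)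
  ultimately show ?thesis using that ctv(1) by blast
qed

lemma apply_1q_normal_form_first:
  assumes "unitary_rows U" "angles_bounded x"
  obtains c x' where "cmod c = 1" "angles_bounded x'"
    "apply_1q a U (normal_form n ((a,b)#ps) x) = (\<lambda>r. c * normal_form n ((a,b)#ps) x' r)"
proof -
  let ?o = "2*n + 7*length ps"
  obtain \<mu> t u v where h: "cmod \<mu> = 1" "\<bar>t\<bar> \<le> pi" "\<bar>u\<bar> \<le> pi" "\<bar>v\<bar> \<le> pi"
    "\<And>w. apply_1q a U (apply_1q a (su2_angles (x (?o+1)) (x (?o+2)) (x (?o+3))) w)
          = (\<lambda>r. \<mu> * apply_1q a (su2_angles t u v) w r)"
    using apply_1q_absorb[OF assms(1), where q = a and t' = "x (?o+1)" and u' = "x (?o+2)"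
        and v' = "x (?o+3)"] by blast
  define x' where "x' = x(?o+1 := t, ?o+2 := u, ?o+3 := v)"
  let ?B = "apply_1q b (su2_angles (x (?o+4)) (x (?o+5)) (x (?o+6))) (apply_ms a b (x ?o) (normal_form n ps x))"
  have "normal_form n ps x' = normal_form n ps x" by (rule normal_form_cong) (auto simp: x'_def)
  then have "normal_form n ((a,b)#ps) x' = apply_1q a (su2_angles t u v) ?B" by (simp add: x'_def)
  moreover have "normal_form n ((a,b)#ps) x = apply_1q a (su2_angles (x (?o+1)) (x (?o+2)) (x (?o+3))) ?B"
    by simp
  ultimately have "apply_1q a U (normal_form n ((a,b)#ps) x) = (\<lambda>r. \<mu> * normal_form n ((a,b)#ps) x' r)"
    by (simp only: h(5))
  moreover have "angles_bounded x'" using assms(2) h(2-4) by (auto simp: angles_bounded_def x'_def)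
  ultimately show ?thesis using that h(1) by blast
qed

lemma apply_1q_normal_form_second:
  assumes "a \<noteq> b" "unitary_rows U" "angles_bounded x"
  obtains c x' where "cmod c = 1" "angles_bounded x'"
    "apply_1q b U (normal_form n ((a,b)#ps) x) = (\<lambda>r. c * normal_form n ((a,b)#ps) x' r)"
proof -
  let ?o = "2*n + 7*length ps"
  let ?A = "su2_angles (x (?o+1)) (x (?o+2)) (x (?o+3))"
  obtain \<mu> t u v where h: "cmod \<mu> = 1" "\<bar>t\<bar> \<le> pi" "\<bar>u\<bar> \<le> pi" "\<bar>v\<bar> \<le> pi"
    "\<And>w. apply_1q b U (apply_1q b (su2_angles (x (?o+4)) (x (?o+5)) (x (?o+6))) w)
          = (\<lambda>r. \<mu> * apply_1q b (su2_angles t u v) w r)"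
    using apply_1q_absorb[OF assms(2), where q = b and t' = "x (?o+4)" and u' = "x (?o+5)"
        and v' = "x (?o+6)"] by blast
  define x' where "x' = x(?o+4 := t, ?o+5 := u, ?o+6 := v)"
  let ?M = "apply_ms a b (x ?o) (normal_form n ps x)"
  have "normal_form n ps x' = normal_form n ps x" by (rule normal_form_cong) (auto simp: x'_def)
  then have "normal_form n ((a,b)#ps) x' = apply_1q a ?A (apply_1q b (su2_angles t u v) ?M)"
    by (simp add: x'_def)
  moreover have "normal_form n ((a,b)#ps) x
      = apply_1q a ?A (apply_1q b (su2_angles (x (?o+4)) (x (?o+5)) (x (?o+6))) ?M)"
    by simp
  ultimately have "apply_1q b U (normal_form n ((a,b)#ps) x) = (\<lambda>r. \<mu> * normal_form n ((a,b)#ps) x' r)"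
    by (simp only: apply_1q_commute[OF assms(1)] h(5) apply_1q_scale)
  moreover have "angles_bounded x'" using assms(3) h(2-4) by (auto simp: angles_bounded_def x'_def)
  ultimately show ?thesis using that h(1) by blast
qed

lemma apply_1q_normal_form:
  assumes "valid_pairs n ps" "q < n" "unitary_rows U" "angles_bounded x"
  shows "\<exists>c x'. cmod c = 1 \<and> angles_bounded x' \<and>
           apply_1q q U (normal_form n ps x) = (\<lambda>r. c * normal_form n ps x' r)"
  using assms(1,4)
proof (induction ps arbitrary: x)
  case Nil
  then show ?case
    by (metis apply_1q_product_state[OF assms(2,3)] normal_form.simps(1))
next
  case (Cons p ps)
  obtain a b where p: "p = (a,b)" by fastforce
  have ab: "a \<noteq> b" and "q \<noteq> a \<Longrightarrow> q \<noteq> b \<Longrightarrow> valid_pairs n ps"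
    using Cons.prems(1) by (auto simp: valid_pairs_def p)
  consider "q = a" | "q = b" | "q \<noteq> a" "q \<noteq> b" by blast
  then show ?case
  proof cases
    case 1
    then show ?thesis
      using apply_1q_normal_form_first[OF assms(3) Cons.prems(2)] unfolding p by metis
  next
    case 2
    then show ?thesis
      using apply_1q_normal_form_second[OF ab assms(3) Cons.prems(2)] unfolding p by metis
  next
    case 3
    obtain c y where y: "cmod c = 1" "angles_bounded y"
      "apply_1q q U (normal_form n ps x) = (\<lambda>r. c * normal_form n ps y r)"
      using Cons.IH \<open>q \<noteq> a \<Longrightarrow> q \<noteq> b \<Longrightarrow> valid_pairs n ps\<close>[OF 3] Cons.prems(2) by blast
    define x' where "x' j = (if j < 2*n + 7*length ps then y j else x j)" for j
    have "normal_form n ps x' = normal_form n ps y" by (rule normal_form_cong) (auto simp: x'_def)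
    then have "apply_1q q U (normal_form n (p#ps) x) = (\<lambda>r. c * normal_form n (p#ps) x' r)"
      using 3 y(3) by (simp add: p x'_def apply_1q_commute apply_1q_apply_ms_commute apply_1q_scale apply_ms_scale)
    moreover have "angles_bounded x'" using Cons.prems(2) y(2) by (auto simp: angles_bounded_def x'_def)
    ultimately show ?thesis using y(1) by blast
  qed
qed

lemma apply_ms_normal_form:
  assumes "angles_bounded x"
  obtains x' where "angles_bounded x'"
    "apply_ms a b t (\<lambda>r. c * normal_form n ps x r) = (\<lambda>r. c * normal_form n ((a,b)#ps) x' r)"
proof -
  let ?o = "2*n + 7*length ps"
  define x' where "x' = x(?o := Arg (cis t), ?o+1 := 0, ?o+2 := 0, ?o+3 := 0, ?o+4 := 0, ?o+5 := 0, ?o+6 := 0)"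
  have "cos (Arg (cis t)) = cos t" "sin (Arg (cis t)) = sin t"
    using arg_cong[OF Arg_cis_cis[of t], of Re] arg_cong[OF Arg_cis_cis[of t], of Im] by simp_all
  moreover have "normal_form n ps x' = normal_form n ps x" by (rule normal_form_cong) (auto simp: x'_def)
  ultimately have "normal_form n ((a,b)#ps) x' = apply_ms a b t (normal_form n ps x)"
    by (simp add: x'_def apply_1q_su2_angles_zero apply_ms_def fun_eq_iff)
  moreover have "angles_bounded x'" using assms abs_Arg_le_pi by (auto simp: angles_bounded_def x'_def)
  ultimately show ?thesis using that by (simp add: apply_ms_scale)
qed

definition reachable :: "nat \<Rightarrow> (nat \<times> nat) list \<Rightarrow> complex vec \<Rightarrow> bool" where
  "reachable n ps v \<longleftrightarrow> (\<exists>c x. cmod c = 1 \<and> angles_bounded x \<and> v = vec (2^n) (\<lambda>r. c * normal_form n ps x r))"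

lemma reachable_carrier: "reachable n ps v \<Longrightarrow> v \<in> carrier_vec (2^n)"
  by (auto simp: reachable_def)

lemma reachable_on_qubit:
  assumes "valid_pairs n ps" "q < n" "unitary_rows (\<lambda>i j. U $$ (i,j))" "reachable n ps v"
  shows "reachable n ps (on_qubit n q U *\<^sub>v v)"
proof -
  obtain c x where v: "cmod c = 1" "angles_bounded x" "v = vec (2^n) (\<lambda>r. c * normal_form n ps x r)"
    using assms(4) by (auto simp: reachable_def)
  obtain c' x' where x': "cmod c' = 1" "angles_bounded x'"
    "apply_1q q (\<lambda>i j. U $$ (i,j)) (normal_form n ps x) = (\<lambda>r. c' * normal_form n ps x' r)"
    using apply_1q_normal_form[OF assms(1-3) v(2)] by blast
  have "on_qubit n q U *\<^sub>v v = vec (2^n) (\<lambda>r. (c * c') * normal_form n ps x' r)"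
    using on_qubit_mult_vec[OF assms(2), of v U] apply_1q_vec_index[OF assms(2)] v(3)
    by (simp add: apply_1q_scale x'(3) mult.assoc)
  then show ?thesis using v(1) x'(1,2) unfolding reachable_def by (metis norm_mult mult_1)
qed

lemma reachable_ms_gate:
  assumes "a < n" "b < n" "a \<noteq> b" "reachable n ps v"
  shows "reachable n ((a,b)#ps) (ms_gate n a b t *\<^sub>v v)"
proof -
  obtain c x where v: "cmod c = 1" "angles_bounded x" "v = vec (2^n) (\<lambda>r. c * normal_form n ps x r)"
    using assms(4) by (auto simp: reachable_def)
  obtain x' where x': "angles_bounded x'"
    "apply_ms a b (t/2) (\<lambda>r. c * normal_form n ps x r) = (\<lambda>r. c * normal_form n ((a,b)#ps) x' r)"
    using apply_ms_normal_form[OF v(2)] .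
  have "ms_gate n a b t *\<^sub>v v = vec (2^n) (\<lambda>r. c * normal_form n ((a,b)#ps) x' r)"
    using ms_gate_mult_vec[OF assms(1-3), of v t] apply_ms_vec_index[OF assms(1,2)] v(3) x'(2) by simp
  then show ?thesis using v(1) x'(1) by (auto simp: reachable_def)
qed

fun ms_pairs :: "gate list \<Rightarrow> (nat \<times> nat) list" where
  "ms_pairs [] = []"
| "ms_pairs (MS a b # gs) = ms_pairs gs @ [(a,b)]"
| "ms_pairs (Rot P q # gs) = ms_pairs gs"
| "ms_pairs (Fixed U q # gs) = ms_pairs gs"

lemma length_ms_pairs: "length (ms_pairs gs) = num_ms gs"
  by (induction gs rule: ms_pairs.induct) (auto simp: num_ms_def)

lemma circ_reachable:
  assumes "\<forall>g\<in>set gs. wf_gate n g" "valid_pairs n ps" "reachable n ps v"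
  shows "reachable n (ms_pairs gs @ ps) (circ n gs xs *\<^sub>v v)"
  using assms
proof (induction gs arbitrary: ps v xs)
  case Nil
  then show ?case using reachable_carrier[OF Nil(3)] by simp
next
  case (Cons g gs)
  have wf: "wf_gate n g" and wfs: "\<forall>g\<in>set gs. wf_gate n g" using Cons.prems(1) by auto
  have v: "v \<in> carrier_vec (2^n)" by (rule reachable_carrier[OF Cons.prems(3)])
  show ?case
  proof (cases g)
    case (Rot P q)
    then have "reachable n ps (on_qubit n q (rot2 P (hd xs)) *\<^sub>v v)"
      using wf Cons.prems(2,3) unitary_rows_rot2 by (intro reachable_on_qubit) (auto simp: wf_gate_def)
    then show ?thesis using Rot Cons.IH[OF wfs Cons.prems(2)] v
      by (simp add: assoc_mult_mat_vec[OF circ_carrier on_qubit_carrier])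
  next
    case (Fixed U q)
    then have "reachable n ps (on_qubit n q U *\<^sub>v v)"
      using wf Cons.prems(2,3) unitary_rows_unitary2 by (intro reachable_on_qubit) (auto simp: wf_gate_def)
    then show ?thesis using Fixed Cons.IH[OF wfs Cons.prems(2)] v
      by (simp add: assoc_mult_mat_vec[OF circ_carrier on_qubit_carrier])
  next
    case (MS a b)
    then have ab: "a < n" "b < n" "a \<noteq> b" using wf by (auto simp: wf_gate_def)
    then have "valid_pairs n ((a,b)#ps)" using Cons.prems(2) by (auto simp: valid_pairs_def)
    moreover have "reachable n ((a,b)#ps) (ms_gate n a b (hd xs) *\<^sub>v v)"
      by (rule reachable_ms_gate[OF ab Cons.prems(3)])
    ultimately show ?thesis using MS Cons.IH[OF wfs] v
      by (simp add: assoc_mult_mat_vec[OF circ_carrier ms_gate_carrier])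
  qed
qed

lemma product_state_zero_angles: "r < 2^n \<Longrightarrow> product_state n (\<lambda>_. 0) r = (if r = 0 then 1 else 0)"
proof -
  assume r: "r < 2^n"
  have "(\<forall>i<n. qbit r i = 0) \<longleftrightarrow> (\<forall>i. \<not> bit r i)"
    using r by (auto simp: qbit_eq_if_bit less_power_iff_high_bits not_less split: if_splits)
  also have "\<dots> \<longleftrightarrow> r = 0" by (auto intro: bit_eqI)
  finally have "(\<forall>i<n. qbit r i = 0) \<longleftrightarrow> r = 0" .
  then show ?thesis by (auto simp: product_state_def qubit_amp_def)
qed

lemma reachable_initial: "reachable n [] (unit_vec (2^n) 0)"
proof -
  have "unit_vec (2^n) 0 = vec (2^n) (\<lambda>r. 1 * normal_form n [] (\<lambda>_. 0) r)"
    by (auto simp: product_state_zero_angles)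
  then show ?thesis
    unfolding reachable_def angles_bounded_def by (intro exI[of _ 1] exI[of _ "\<lambda>_. 0"]) simp
qed


section \<open>Lipschitz bounds\<close>

definition bounded_lipschitz :: "nat \<Rightarrow> ((nat \<Rightarrow> real) \<Rightarrow> 'r \<Rightarrow> complex) \<Rightarrow> bool" where
  "bounded_lipschitz K F \<longleftrightarrow> (\<exists>B L. \<forall>x r. cmod (F x r) \<le> B \<and>
      (\<forall>y e. 0 \<le> e \<and> (\<forall>j<K. \<bar>x j - y j\<bar> \<le> e) \<longrightarrow> cmod (F x r - F y r) \<le> L * e))"

lemma bounded_lipschitzI:
  assumes "\<And>x r. cmod (F x r) \<le> B"
    and "\<And>x y e r. 0 \<le> e \<Longrightarrow> (\<forall>j<K. \<bar>x j - y j\<bar> \<le> e) \<Longrightarrow> cmod (F x r - F y r) \<le> L * e"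
  shows "bounded_lipschitz K F"
  unfolding bounded_lipschitz_def using assms by blast

lemma bounded_lipschitzE:
  assumes "bounded_lipschitz K F"
  obtains B L where "0 \<le> B" "0 \<le> L" "\<And>x r. cmod (F x r) \<le> B"
    "\<And>x y e r. 0 \<le> e \<Longrightarrow> (\<forall>j<K. \<bar>x j - y j\<bar> \<le> e) \<Longrightarrow> cmod (F x r - F y r) \<le> L * e"
proof -
  obtain B L where h: "\<forall>x r. cmod (F x r) \<le> B \<and>
      (\<forall>y e. 0 \<le> e \<and> (\<forall>j<K. \<bar>x j - y j\<bar> \<le> e) \<longrightarrow> cmod (F x r - F y r) \<le> L * e)"
    using assms by (auto simp: bounded_lipschitz_def)
  have b1: "cmod (F x r) \<le> max B 0" for x r using h by (meson max.coboundedI1)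
  have b2: "cmod (F x r - F y r) \<le> max L 0 * e"
      if "0 \<le> e" "\<forall>j<K. \<bar>x j - y j\<bar> \<le> e" for x y e r
  proof -
    have "cmod (F x r - F y r) \<le> L * e" using h that by blast
    also have "\<dots> \<le> max L 0 * e" using that(1) by (intro mult_right_mono) auto
    finally show ?thesis .
  qed
  have "0 \<le> max B 0" "0 \<le> max L 0" by auto
  then show ?thesis using that b1 b2 by blast
qed

lemma bounded_lipschitz_uminus: "bounded_lipschitz K F \<Longrightarrow> bounded_lipschitz K (\<lambda>x r. - F x r)"
  unfolding bounded_lipschitz_def by (metis norm_minus_cancel minus_diff_minus)

lemma bounded_lipschitz_const: "(\<And>r. cmod (c r) \<le> B) \<Longrightarrow> bounded_lipschitz K (\<lambda>x r. c r)"
  by (rule bounded_lipschitzI[where L=0]) auto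

lemma bounded_lipschitz_add:
  assumes "bounded_lipschitz K F" "bounded_lipschitz K Q"
  shows "bounded_lipschitz K (\<lambda>x r. F x r + Q x r)"
proof -
  obtain B1 L1 where f: "0 \<le> B1" "0 \<le> L1" "\<And>x r. cmod (F x r) \<le> B1"
    "\<And>x y e r. 0 \<le> e \<Longrightarrow> (\<forall>j<K. \<bar>x j - y j\<bar> \<le> e) \<Longrightarrow> cmod (F x r - F y r) \<le> L1 * e"
    using bounded_lipschitzE[OF assms(1)] by blast
  obtain B2 L2 where g: "0 \<le> B2" "0 \<le> L2" "\<And>x r. cmod (Q x r) \<le> B2"
    "\<And>x y e r. 0 \<le> e \<Longrightarrow> (\<forall>j<K. \<bar>x j - y j\<bar> \<le> e) \<Longrightarrow> cmod (Q x r - Q y r) \<le> L2 * e"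
    using bounded_lipschitzE[OF assms(2)] by blast
  show ?thesis
  proof (rule bounded_lipschitzI[where B="B1 + B2" and L="L1 + L2"])
    show "cmod (F x r + Q x r) \<le> B1 + B2" for x r
      using norm_triangle_ineq[of "F x r" "Q x r"] f(3)[of x r] g(3)[of x r] by linarith
    show "cmod (F x r + Q x r - (F y r + Q y r)) \<le> (L1 + L2) * e"
      if "0 \<le> e" "\<forall>j<K. \<bar>x j - y j\<bar> \<le> e" for x y e r
    proof -
      have "cmod (F x r + Q x r - (F y r + Q y r)) \<le> cmod (F x r - F y r) + cmod (Q x r - Q y r)"
        using norm_triangle_ineq[of "F x r - F y r" "Q x r - Q y r"] by (simp add: algebra_simps)
      also have "\<dots> \<le> L1 * e + L2 * e" using f(4)[OF that, of r] g(4)[OF that, of r] by linarith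
      finally show ?thesis by (simp add: algebra_simps)
    qed
  qed
qed

lemma bounded_lipschitz_mult:
  assumes "bounded_lipschitz K F" "bounded_lipschitz K Q"
  shows "bounded_lipschitz K (\<lambda>x r. F x r * Q x r)"
proof -
  obtain B1 L1 where f: "0 \<le> B1" "0 \<le> L1" "\<And>x r. cmod (F x r) \<le> B1"
    "\<And>x y e r. 0 \<le> e \<Longrightarrow> (\<forall>j<K. \<bar>x j - y j\<bar> \<le> e) \<Longrightarrow> cmod (F x r - F y r) \<le> L1 * e"
    using bounded_lipschitzE[OF assms(1)] by blast
  obtain B2 L2 where g: "0 \<le> B2" "0 \<le> L2" "\<And>x r. cmod (Q x r) \<le> B2"
    "\<And>x y e r. 0 \<le> e \<Longrightarrow> (\<forall>j<K. \<bar>x j - y j\<bar> \<le> e) \<Longrightarrow> cmod (Q x r - Q y r) \<le> L2 * e"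
    using bounded_lipschitzE[OF assms(2)] by blast
  show ?thesis
  proof (rule bounded_lipschitzI[where B="B1 * B2" and L="B1 * L2 + B2 * L1"])
    show "cmod (F x r * Q x r) \<le> B1 * B2" for x r
      unfolding norm_mult by (intro mult_mono f(3) g(3)) (auto simp: f(1))
    show "cmod (F x r * Q x r - F y r * Q y r) \<le> (B1 * L2 + B2 * L1) * e"
      if "0 \<le> e" "\<forall>j<K. \<bar>x j - y j\<bar> \<le> e" for x y e r
    proof -
      have "F x r * Q x r - F y r * Q y r = F x r * (Q x r - Q y r) + Q y r * (F x r - F y r)"
        by (simp add: algebra_simps)
      then have "cmod (F x r * Q x r - F y r * Q y r) \<le> cmod (F x r) * cmod (Q x r - Q y r) + cmod (Q y r) * cmod (F x r - F y r)"
        by (metis norm_mult norm_triangle_ineq)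
      also have "\<dots> \<le> B1 * (L2 * e) + B2 * (L1 * e)"
        by (intro add_mono mult_mono f(3) g(3) f(4)[OF that] g(4)[OF that]) (auto simp: f(1) g(1))
      finally show ?thesis by (simp add: algebra_simps)
    qed
  qed
qed

lemma bounded_lipschitz_cnj:
  assumes "bounded_lipschitz K F"
  shows "bounded_lipschitz K (\<lambda>x r. cnj (F x r))"
  using assms unfolding bounded_lipschitz_def
  by (metis complex_cnj_diff complex_mod_cnj)

lemma bounded_lipschitz_reindex:
  assumes "bounded_lipschitz K F"
  shows "bounded_lipschitz K (\<lambda>x r. F x (\<sigma> r))"
  using assms unfolding bounded_lipschitz_def by blast

lemma bounded_lipschitz_if:
  assumes "bounded_lipschitz K F" "bounded_lipschitz K Q"
  shows "bounded_lipschitz K (\<lambda>x r. if P r then F x r else Q x r)"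
proof -
  have "(\<lambda>x r. if P r then F x r else Q x r) = (\<lambda>x r. of_bool (P r) * F x r + of_bool (\<not> P r) * Q x r)"
    by (simp add: fun_eq_iff)
  then show ?thesis
    by (simp only:) (intro bounded_lipschitz_add bounded_lipschitz_mult bounded_lipschitz_const[where B=1] assms, simp_all)
qed

lemma abs_cos_diff: "\<bar>cos (a::real) - cos b\<bar> \<le> \<bar>a - b\<bar>"
proof -
  have "\<bar>cos a - cos b\<bar> = 2 * \<bar>sin ((a + b) / 2)\<bar> * \<bar>sin ((b - a) / 2)\<bar>"
    by (simp add: cos_diff_cos abs_mult)
  also have "\<dots> \<le> 2 * 1 * \<bar>(b - a) / 2\<bar>"
    by (intro mult_mono abs_sin_x_le_abs_x) auto
  finally show ?thesis by simp
qed

lemma abs_sin_diff: "\<bar>sin (a::real) - sin b\<bar> \<le> \<bar>a - b\<bar>"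
proof -
  have "\<bar>sin a - sin b\<bar> = 2 * \<bar>sin ((a - b) / 2)\<bar> * \<bar>cos ((a + b) / 2)\<bar>"
    by (simp add: sin_diff_sin abs_mult)
  also have "\<dots> \<le> 2 * \<bar>(a - b) / 2\<bar> * 1"
    by (intro mult_mono abs_sin_x_le_abs_x) auto
  finally show ?thesis by simp
qed

lemma bounded_lipschitz_cos: "j < K \<Longrightarrow> bounded_lipschitz K (\<lambda>x r. complex_of_real (cos (x j)))"
  by (rule bounded_lipschitzI[where B=1 and L=1]) (auto intro: order_trans[OF abs_cos_diff] simp flip: of_real_diff)

lemma bounded_lipschitz_sin: "j < K \<Longrightarrow> bounded_lipschitz K (\<lambda>x r. complex_of_real (sin (x j)))"
  by (rule bounded_lipschitzI[where B=1 and L=1]) (auto intro: order_trans[OF abs_sin_diff] simp flip: of_real_diff)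

lemma bounded_lipschitz_cis: "j < K \<Longrightarrow> bounded_lipschitz K (\<lambda>x r. cis (x j))"
proof (rule bounded_lipschitzI[where B=1 and L=2])
  fix x y :: "nat \<Rightarrow> real" and e :: real and r :: 'a
  assume j: "j < K" and e: "0 \<le> e" "\<forall>j<K. \<bar>x j - y j\<bar> \<le> e"
  have "cmod (cis (x j) - cis (y j)) \<le> \<bar>cos (x j) - cos (y j)\<bar> + \<bar>sin (x j) - sin (y j)\<bar>"
    using cmod_le[of "cis (x j) - cis (y j)"] by simp
  also have "\<dots> \<le> e + e" using abs_cos_diff[of "x j" "y j"] abs_sin_diff[of "x j" "y j"] e j by fastforce
  finally show "cmod (cis (x j) - cis (y j)) \<le> 2 * e" by simp
qed simp

lemma bounded_lipschitz_prod:
  assumes "finite I" "\<And>i. i \<in> I \<Longrightarrow> bounded_lipschitz K (F i)"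
  shows "bounded_lipschitz K (\<lambda>x r. \<Prod>i\<in>I. F i x r)"
  using assms
proof (induction I rule: finite_induct)
  case empty
  then show ?case using bounded_lipschitz_const[of "\<lambda>_. 1" 1] by simp
next
  case (insert i I)
  then show ?case by (simp add: bounded_lipschitz_mult)
qed

lemma bounded_lipschitz_mono: "K \<le> K' \<Longrightarrow> bounded_lipschitz K F \<Longrightarrow> bounded_lipschitz K' F"
  unfolding bounded_lipschitz_def by (meson order_less_le_trans)

lemma bounded_lipschitz_shift: "bounded_lipschitz K F \<Longrightarrow> bounded_lipschitz (K + s) (\<lambda>x r. F (\<lambda>j. x (j + s)) r)"
  unfolding bounded_lipschitz_def by (metis add_less_cancel_right)

lemma bounded_lipschitz_su2_angles:
  assumes "i1 < K" "i2 < K" "i3 < K"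
  shows "bounded_lipschitz K (\<lambda>x r. su2_angles (x i1) (x i2) (x i3) (f r) (g r))"
proof -
  have a: "bounded_lipschitz K (\<lambda>x r. complex_of_real (cos (x i1)) * cis (x i2))"
    using assms by (intro bounded_lipschitz_mult bounded_lipschitz_cos bounded_lipschitz_cis)
  have b: "bounded_lipschitz K (\<lambda>x r. complex_of_real (sin (x i1)) * cis (x i3))"
    using assms by (intro bounded_lipschitz_mult bounded_lipschitz_sin bounded_lipschitz_cis)
  have "bounded_lipschitz K (\<lambda>x r. if f r = 0 then (if g r = 0 then complex_of_real (cos (x i1)) * cis (x i2)
        else complex_of_real (sin (x i1)) * cis (x i3)) else (if g r = 0 then - cnj (complex_of_real (sin (x i1)) * cis (x i3))
        else cnj (complex_of_real (cos (x i1)) * cis (x i2))))"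
    using a b by (intro bounded_lipschitz_if bounded_lipschitz_cnj bounded_lipschitz_uminus)
  then show ?thesis by (simp add: su2_angles_def su2_def)
qed

lemma bounded_lipschitz_apply_1q:
  assumes "bounded_lipschitz K (\<lambda>x r. A x (qbit r q) 0)" "bounded_lipschitz K (\<lambda>x r. A x (qbit r q) 1)" "bounded_lipschitz K W"
  shows "bounded_lipschitz K (\<lambda>x r. apply_1q q (A x) (W x) r)"
  unfolding apply_1q_def
  by (intro bounded_lipschitz_add bounded_lipschitz_mult assms bounded_lipschitz_reindex[OF assms(3)])

lemma bounded_lipschitz_apply_ms:
  assumes "j < K" "bounded_lipschitz K W"
  shows "bounded_lipschitz K (\<lambda>x r. apply_ms a b (x j) (W x) r)"
proof -
  have "bounded_lipschitz K (\<lambda>x r. complex_of_real (cos (x j)) * W x r + (- \<i>) * complex_of_real (sin (x j)) * W x (flip_pair a b r))"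
    by (intro bounded_lipschitz_add bounded_lipschitz_mult bounded_lipschitz_const[where B=1]
          bounded_lipschitz_cos bounded_lipschitz_sin bounded_lipschitz_reindex[OF assms(2)]) (use assms in simp_all)
  then show ?thesis by (simp add: apply_ms_def)
qed

lemma bounded_lipschitz_normal_form: "bounded_lipschitz (2*n + 7*length ps) (\<lambda>x r. normal_form n ps x r)"
proof (induction ps)
  case Nil
  have "bounded_lipschitz (2*n) (\<lambda>x r. \<Prod>i<n. qubit_amp x i (qbit r i))"
  proof (rule bounded_lipschitz_prod)
    fix i assume "i \<in> {..<n}"
    then have i: "2*i < 2*n" "2*i+1 < 2*n" by auto
    have "bounded_lipschitz (2*n) (\<lambda>x r. if qbit r i = 0 then complex_of_real (cos (x (2*i)))
            else complex_of_real (sin (x (2*i))) * cis (x (2*i+1)))"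
      using i by (intro bounded_lipschitz_if bounded_lipschitz_mult bounded_lipschitz_cos bounded_lipschitz_sin bounded_lipschitz_cis)
    then show "bounded_lipschitz (2*n) (\<lambda>x r. qubit_amp x i (qbit r i))" by (simp add: qubit_amp_def)
  qed simp
  then show ?case by (simp add: product_state_def)
next
  case (Cons p ps)
  obtain a b where p: "p = (a,b)" by fastforce
  let ?K = "2*n + 7*length (p#ps)"
  let ?o = "2*n + 7*length ps"
  have IH: "bounded_lipschitz ?K (\<lambda>x r. normal_form n ps x r)" by (rule bounded_lipschitz_mono[OF _ Cons.IH]) simp
  show ?case
    unfolding p normal_form.simps
    by (intro bounded_lipschitz_apply_1q bounded_lipschitz_su2_angles bounded_lipschitz_apply_ms) (use IH in auto)
qed


section \<open>Lipschitz images of low-dimensional boxes\<close>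

lemma nat_near_subset:
  fixes t s :: real
  assumes "0 \<le> s"
  shows "{k::nat. \<bar>real k - t\<bar> \<le> s} \<subseteq> {nat \<lceil>t - s\<rceil> .. nat \<lceil>t - s\<rceil> + nat \<lceil>2*s\<rceil>}"
proof
  fix k assume "k \<in> {k::nat. \<bar>real k - t\<bar> \<le> s}"
  then have k: "t - s \<le> real k" "real k \<le> (t - s) + 2*s" by auto
  have "real k \<le> of_int \<lceil>t - s\<rceil> + of_int \<lceil>2*s\<rceil>"
    using k(2) le_of_int_ceiling[of "t - s"] le_of_int_ceiling[of "2*s"] by linarith
  then have "int k \<le> \<lceil>t - s\<rceil> + \<lceil>2*s\<rceil>" by linarith
  moreover have "\<lceil>t - s\<rceil> \<le> int k" using k(1) by (simp add: ceiling_le_iff)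
  moreover have "0 \<le> \<lceil>2*s\<rceil>" using assms by simp
  ultimately have "nat \<lceil>t - s\<rceil> \<le> k" "k \<le> nat \<lceil>t - s\<rceil> + nat \<lceil>2*s\<rceil>" by linarith+
  then show "k \<in> {nat \<lceil>t - s\<rceil> .. nat \<lceil>t - s\<rceil> + nat \<lceil>2*s\<rceil>}" by simp
qed

lemma finite_nat_near: "0 \<le> s \<Longrightarrow> finite {k::nat. \<bar>real k - t\<bar> \<le> s}"
  by (rule finite_subset[OF nat_near_subset]) simp_all

lemma card_nat_near_le: "0 \<le> s \<Longrightarrow> card {k::nat. \<bar>real k - t\<bar> \<le> s} \<le> nat \<lceil>2*s\<rceil> + 1"
  using card_mono[OF _ nat_near_subset, of t s] by simp

lemma grid_size_lt:
  fixes M C K N :: nat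
  assumes "K < N" "M = 3^K * C^N + 1"
  shows "(2*M+1)^K * C^N < M^N"
proof -
  have M1: "1 \<le> M" using assms(2) by simp
  have "(2*M+1)^K * C^N \<le> 3^K * M^K * C^N"
    using power_mono[of "2*M+1" "3*M" K] M1 by (simp add: power_mult_distrib)
  also have "\<dots> < M * M^K"
    using M1 assms(2) by (simp add: ac_simps)
  also have "\<dots> \<le> M^N"
    using power_increasing[of "K+1" N M] assms(1) M1 by simp
  finally show ?thesis .
qed

lemma grid_approx:
  fixes R :: real and M :: nat
  assumes "0 < R" "0 < M" "\<forall>j<K. \<bar>x j\<bar> \<le> R"
  obtains g where "g \<in> PiE {..<K} (\<lambda>_. {0..2*M})"
    "\<forall>j<K. \<bar>x j - R * (real (g j) - real M) / real M\<bar> \<le> R / real M"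
proof -
  define u where "u j = (x j + R) * real M / R" for j
  have u: "0 \<le> u j" "u j \<le> 2 * real M" if "j < K" for j
  proof -
    have "0 \<le> x j + R" "x j + R \<le> 2 * R" using assms(3) that by auto
    then have "0 \<le> (x j + R) * real M" "(x j + R) * real M \<le> 2 * R * real M"
      by (auto intro: mult_right_mono)
    then show "0 \<le> u j" "u j \<le> 2 * real M"
      using assms(1) by (simp_all add: u_def pos_divide_le_eq mult.commute mult.left_commute)
  qed
  define g where "g = restrict (\<lambda>j. nat \<lfloor>u j\<rfloor>) {..<K}"
  have "g \<in> PiE {..<K} (\<lambda>_. {0..2*M})"
    using u(2) by (force simp: g_def nat_le_iff floor_le_iff)
  moreover have "\<bar>x j - R * (real (g j) - real M) / real M\<bar> \<le> R / real M" if "j < K" for j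
  proof -
    have "x j - R * (real (g j) - real M) / real M = R * (u j - of_int \<lfloor>u j\<rfloor>) / real M"
      using assms(1,2) u(1)[OF that] that by (simp add: g_def u_def field_simps)
    moreover have "0 \<le> u j - of_int \<lfloor>u j\<rfloor>" "u j - of_int \<lfloor>u j\<rfloor> \<le> 1" by linarith+
    ultimately show ?thesis using assms(1,2) by (simp add: abs_of_nonneg divide_right_mono)
  qed
  ultimately show ?thesis using that by blast
qed

text \<open>Pigeonhole on grids: each of the M^N cells of the cube lies near the image of one of the
  (2M+1)^K points of a grid in the box, and each grid point is near at most C^N cells, where C does
  not depend on M; but (2M+1)^K C^N < M^N for large M.\<close>
lemma lipschitz_image_contains_no_cube:
  fixes h :: "(nat \<Rightarrow> real) \<Rightarrow> nat \<Rightarrow> real"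
  assumes "K < N" "0 < R" "0 < \<delta>" "0 \<le> L"
    and lip: "\<And>x y e i. i < N \<Longrightarrow> 0 \<le> e \<Longrightarrow> (\<forall>j<K. \<bar>x j - y j\<bar> \<le> e) \<Longrightarrow> \<bar>h x i - h y i\<bar> \<le> L * e"
    and cover: "\<And>z. \<forall>i<N. 0 \<le> z i \<and> z i \<le> \<delta> \<Longrightarrow> \<exists>x. (\<forall>j<K. \<bar>x j\<bar> \<le> R) \<and> (\<forall>i<N. h x i = z i)"
  shows False
proof -
  define s where "s = L * R / \<delta>"
  have s: "0 \<le> s" using assms(2-4) by (simp add: s_def)
  define C where "C = nat \<lceil>2*s\<rceil> + 1"
  define M :: nat where "M = 3^K * C^N + 1"
  have "0 < M" by (simp add: M_def)
  then have M: "0 < real M" by simp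
  define grid where "grid = PiE {..<K} (\<lambda>_. {0..2*M})"
  define point where "point g = (\<lambda>j. R * (real (g j) - real M) / real M)" for g :: "nat \<Rightarrow> nat"
  define cells where "cells = PiE {..<N} (\<lambda>_. {..<M})"
  define near where "near g = PiE {..<N} (\<lambda>i. {k::nat. \<bar>real k - real M / \<delta> * h (point g) i\<bar> \<le> s})" for g
  have "cells \<subseteq> (\<Union>g\<in>grid. near g)"
  proof
    fix a assume a: "a \<in> cells"
    define z where "z i = \<delta> * real (a i) / real M" for i
    have "\<forall>i<N. 0 \<le> z i \<and> z i \<le> \<delta>"
      using a assms(3) M by (auto simp: z_def cells_def PiE_def Pi_def field_simps)
    then obtain x where x: "\<forall>j<K. \<bar>x j\<bar> \<le> R" "\<forall>i<N. h x i = z i" using cover by blast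
    obtain g where g: "g \<in> grid" "\<forall>j<K. \<bar>x j - point g j\<bar> \<le> R / real M"
      using grid_approx[OF assms(2) _ x(1), of M] M by (auto simp: grid_def point_def)
    have "\<bar>real (a i) - real M / \<delta> * h (point g) i\<bar> \<le> s" if i: "i < N" for i
    proof -
      have "\<bar>z i - h (point g) i\<bar> \<le> L * (R / real M)"
        using lip[OF i _ g(2)] x(2) i assms(2) M by simp
      then have "real M / \<delta> * \<bar>z i - h (point g) i\<bar> \<le> real M / \<delta> * (L * (R / real M))"
        using M assms(3) by (intro mult_left_mono) auto
      then show ?thesis
        using M assms(3) by (simp add: z_def s_def abs_mult field_simps)
    qed
    then have "a \<in> near g" using a by (auto simp: near_def cells_def PiE_def Pi_def)
    then show "a \<in> (\<Union>g\<in>grid. near g)" using g(1) by blast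
  qed
  moreover have "finite grid" "finite (near g)" for g
    by (simp_all add: grid_def near_def finite_PiE finite_nat_near[OF s])
  moreover have "card (near g) \<le> C^N" for g
  proof -
    have "card (near g) = (\<Prod>i<N. card {k::nat. \<bar>real k - real M / \<delta> * h (point g) i\<bar> \<le> s})"
      by (simp add: near_def card_PiE)
    also have "\<dots> \<le> (\<Prod>i<N. C)" by (intro prod_mono) (use card_nat_near_le[OF s] in \<open>auto simp: C_def\<close>)
    finally show ?thesis by simp
  qed
  ultimately have "M^N \<le> (2*M+1)^K * C^N"
    using card_mono[of "\<Union>g\<in>grid. near g" cells] card_UN_le[of grid near]
      sum_mono[of grid "\<lambda>g. card (near g)" "\<lambda>_. C^N"]
    by (simp add: cells_def grid_def card_PiE)
  with grid_size_lt[OF assms(1) M_def] show False by simp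
qed


section \<open>Counting parameters\<close>

lemma ms_count_bound_from_param_count:
  assumes "n \<ge> 1" "2 ^ (n+1) \<le> 2*n + 7*m + 2"
  shows "of_int \<lceil>(2 ^ (n+1) - 2 * real n - 2) / (2 * real n + 1)\<rceil> \<le> real m"
proof (rule ccontr)
  assume "\<not> ?thesis"
  then have "int m < \<lceil>(2 ^ (n+1) - 2 * real n - 2) / (2 * real n + 1)\<rceil>" by linarith
  then have "real m < (2 ^ (n+1) - 2 * real n - 2) / (2 * real n + 1)"
    by (simp add: less_ceiling_iff)
  then have below: "real m * (2 * real n + 1) < 2 ^ (n+1) - 2 * real n - 2"
    by (simp add: pos_less_divide_eq)
  have "real (2*n + 7*m + 2) < 2 ^ (n+1)"
  proof (cases "m = 0")
    case False
    then have "1 \<le> real m" by simp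
    have "n \<ge> 3"
    proof (rule ccontr)
      assume "\<not> n \<ge> 3"
      then have "n = 1 \<or> n = 2" using assms(1) by auto
      then show False using below \<open>1 \<le> real m\<close> by auto
    qed
    then have "7 \<le> 2 * real n + 1" by simp
    then have "real m * 7 \<le> real m * (2 * real n + 1)" by (intro mult_left_mono) auto
    then show ?thesis using below by simp
  qed (use below in simp)
  then show False using assms(2) by (metis not_le of_nat_less_iff of_nat_numeral of_nat_power)
qed

text \<open>The radius cos (x 0) and the phase cis (x 1) turn the unit sphere of prepared states into
  a whole neighbourhood of 0 in C^(2^n).\<close>
definition scaled_state :: "nat \<Rightarrow> (nat \<times> nat) list \<Rightarrow> (nat \<Rightarrow> real) \<Rightarrow> amplitudes" where
  "scaled_state n ps x r = complex_of_real (cos (x 0)) * cis (x 1) * normal_form n ps (\<lambda>j. x (j+2)) r"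

lemma bounded_lipschitz_scaled_state: "bounded_lipschitz (2*n + 7*length ps + 2) (scaled_state n ps)"
proof -
  have "bounded_lipschitz (2*n + 7*length ps + 2) (\<lambda>x r. normal_form n ps (\<lambda>j. x (j+2)) r)"
    using bounded_lipschitz_shift[OF bounded_lipschitz_normal_form, of n ps 2] by simp
  then show ?thesis
    unfolding scaled_state_def[abs_def]
    by (intro bounded_lipschitz_mult bounded_lipschitz_cos bounded_lipschitz_cis) auto
qed

lemma circ_initial_reachable:
  "\<forall>g\<in>set gs. wf_gate n g \<Longrightarrow> reachable n (ms_pairs gs) (circ n gs xs *\<^sub>v unit_vec (2^n) 0)"
  using circ_reachable[OF _ _ reachable_initial] by (simp add: valid_pairs_def)

lemma unit_state_unit_vec: "unit_state n (unit_vec (2^n) 0)"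
proof -
  have "(\<Sum>i<2^n. (cmod (unit_vec (2^n) 0 $ i))\<^sup>2) = (\<Sum>i<(2::nat)^n. if i = 0 then (1::real) else 0)"
    by (intro sum.cong) auto
  then show ?thesis by (simp add: unit_state_def)
qed

lemma eq_norm_times_unit_state:
  assumes "(\<Sum>r<2^n. (cmod (\<phi> r))\<^sup>2) \<le> 1"
  obtains \<psi> where "unit_state n \<psi>"
    "\<And>r. r < 2^n \<Longrightarrow> \<phi> r = sqrt (\<Sum>r<2^n. (cmod (\<phi> r))\<^sup>2) * \<psi> $ r"
proof -
  define S where "S = (\<Sum>r<2^n. (cmod (\<phi> r))\<^sup>2)"
  have S: "0 \<le> S" by (simp add: S_def sum_nonneg)
  show ?thesis
  proof (cases "S = 0")
    case True
    then have "\<phi> r = 0" if "r < 2^n" for r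
      using that sum_nonneg_eq_0_iff[of "{..<2^n}" "\<lambda>r. (cmod (\<phi> r))\<^sup>2"] by (simp add: S_def)
    then show ?thesis using that[OF unit_state_unit_vec] True by (simp add: S_def)
  next
    case False
    define \<psi> where "\<psi> = vec (2^n) (\<lambda>r. \<phi> r / sqrt S)"
    have "(\<Sum>i<2^n. (cmod (\<psi> $ i))\<^sup>2) = (\<Sum>i<2^n. (cmod (\<phi> i))\<^sup>2 / S)"
      using S by (intro sum.cong) (auto simp: \<psi>_def norm_divide power_divide)
    also have "\<dots> = 1" using False by (simp add: S_def flip: sum_divide_distrib)
    finally have "unit_state n \<psi>" by (simp add: unit_state_def \<psi>_def)
    then show ?thesis using that S False by (simp add: \<psi>_def S_def)
  qed
qed

lemma scaled_state_onto_ball: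
  assumes wf: "\<forall>g\<in>set gs. wf_gate n g"
    and prep: "\<forall>\<psi>. unit_state n \<psi> \<longrightarrow> (\<exists>x. length x = num_params gs \<and>
                 (\<exists>c::complex. cmod c = 1 \<and> circ n gs x *\<^sub>v unit_vec (2^n) 0 = c \<cdot>\<^sub>v \<psi>))"
    and small: "(\<Sum>r<2^n. (cmod (\<phi> r))\<^sup>2) \<le> 1"
  obtains x where "\<forall>j. \<bar>x j\<bar> \<le> pi" "\<forall>r<2^n. scaled_state n (ms_pairs gs) x r = \<phi> r"
proof -
  define nr where "nr = sqrt (\<Sum>r<2^n. (cmod (\<phi> r))\<^sup>2)"
  have nr: "0 \<le> nr" "nr \<le> 1" using small by (auto simp: nr_def sum_nonneg)
  obtain \<psi> where \<psi>: "unit_state n \<psi>" "\<And>r. r < 2^n \<Longrightarrow> \<phi> r = nr * \<psi> $ r"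
    using eq_norm_times_unit_state[OF small] unfolding nr_def by blast
  obtain xs c where c: "cmod c = 1" "circ n gs xs *\<^sub>v unit_vec (2^n) 0 = c \<cdot>\<^sub>v \<psi>"
    using prep \<psi>(1) by blast
  obtain c' y where c': "cmod c' = 1" "angles_bounded y"
    "circ n gs xs *\<^sub>v unit_vec (2^n) 0 = vec (2^n) (\<lambda>r. c' * normal_form n (ms_pairs gs) y r)"
    using circ_initial_reachable[OF wf, of xs] unfolding reachable_def by blast
  have "c \<noteq> 0" using c(1) by auto
  define q where "q = c' / c"
  have "cmod q = 1" using c(1) c'(1) by (simp add: q_def norm_divide)
  moreover from this have "q \<noteq> 0" by auto
  ultimately have q: "cis (Arg q) = q" by (simp add: cis_Arg sgn_div_norm)
  define x where "x j = (if j = 0 then arccos nr else if j = 1 then Arg q else y (j - 2))" for j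
  have "scaled_state n (ms_pairs gs) x r = \<phi> r" if r: "r < 2^n" for r
  proof -
    have "c * \<psi> $ r = c' * normal_form n (ms_pairs gs) y r"
      using arg_cong[OF c(2), of "\<lambda>v. v $ r"] c'(3) r \<psi>(1) by (simp add: unit_state_def)
    then have "\<psi> $ r = q * normal_form n (ms_pairs gs) y r"
      using \<open>c \<noteq> 0\<close> by (simp add: q_def field_simps)
    then show ?thesis
      using \<psi>(2)[OF r] nr by (simp add: scaled_state_def x_def q cos_arccos)
  qed
  moreover have "\<bar>x j\<bar> \<le> pi" for j
    using nr c'(2) abs_Arg_le_pi arccos_lbound[of nr] arccos_ubound[of nr]
    by (auto simp: x_def angles_bounded_def)
  ultimately show ?thesis using that by blast
qed

lemma sum_cmod_sq_small_coords:
  fixes z :: "nat \<Rightarrow> real"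
  assumes "0 < k" "\<forall>i<2*k. 0 \<le> z i \<and> z i \<le> 1 / real (2*k)"
  shows "(\<Sum>r<k. (cmod (Complex (z (2*r)) (z (2*r+1))))\<^sup>2) \<le> 1"
proof -
  define \<delta> where "\<delta> = 1 / real (2*k)"
  have sq: "z i * z i \<le> \<delta> * \<delta>" if "i < 2*k" for i
    using assms(2) that by (intro mult_mono) (auto simp: \<delta>_def)
  have "(cmod (Complex (z (2*r)) (z (2*r+1))))\<^sup>2 \<le> 2 * (\<delta> * \<delta>)" if "r < k" for r
  proof -
    have "(cmod (Complex (z (2*r)) (z (2*r+1))))\<^sup>2 = z (2*r) * z (2*r) + z (2*r+1) * z (2*r+1)"
      by (simp add: cmod_def power2_eq_square)
    then show ?thesis using sq[of "2*r"] sq[of "2*r+1"] that by simp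
  qed
  then have "(\<Sum>r<k. (cmod (Complex (z (2*r)) (z (2*r+1))))\<^sup>2) \<le> (\<Sum>r<k. 2 * (\<delta> * \<delta>))"
    by (intro sum_mono) auto
  also have "\<dots> = \<delta>" using assms(1) by (simp add: \<delta>_def field_simps)
  also have "\<dots> \<le> 1" using assms(1) by (simp add: \<delta>_def)
  finally show ?thesis .
qed

lemma state_dimension_le_angle_count:
  assumes wf: "\<forall>g\<in>set gs. wf_gate n g"
    and prep: "\<forall>\<psi>. unit_state n \<psi> \<longrightarrow> (\<exists>x. length x = num_params gs \<and>
                 (\<exists>c::complex. cmod c = 1 \<and> circ n gs x *\<^sub>v unit_vec (2^n) 0 = c \<cdot>\<^sub>v \<psi>))"
  shows "2 ^ (n+1) \<le> 2*n + 7 * num_ms gs + 2"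
proof (rule ccontr)
  assume few_params: "\<not> ?thesis"
  define ps where "ps = ms_pairs gs"
  define K where "K = 2*n + 7*length ps + 2"
  define N :: nat where "N = 2^(n+1)"
  have "K < N" using few_params by (simp add: K_def N_def ps_def length_ms_pairs)
  obtain L where "0 \<le> L" and lip: "\<And>x y e r. 0 \<le> e \<Longrightarrow> \<forall>j<K. \<bar>x j - y j\<bar> \<le> e
      \<Longrightarrow> cmod (scaled_state n ps x r - scaled_state n ps y r) \<le> L * e"
    using bounded_lipschitz_scaled_state[of n ps] unfolding K_def by (elim bounded_lipschitzE) blast
  define h where "h x i = (if even i then Re (scaled_state n ps x (i div 2))
                           else Im (scaled_state n ps x (i div 2)))" for x i
  show False
  proof (rule lipschitz_image_contains_no_cube[of K N pi "1 / real N" L h])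
    show "\<bar>h x i - h y i\<bar> \<le> L * e" if "0 \<le> e" "\<forall>j<K. \<bar>x j - y j\<bar> \<le> e" for x y e i
      using abs_Re_le_cmod[of "scaled_state n ps x (i div 2) - scaled_state n ps y (i div 2)"]
        abs_Im_le_cmod[of "scaled_state n ps x (i div 2) - scaled_state n ps y (i div 2)"]
        lip[OF that, of "i div 2"] by (auto simp: h_def)
    show "\<exists>x. (\<forall>j<K. \<bar>x j\<bar> \<le> pi) \<and> (\<forall>i<N. h x i = z i)"
      if "\<forall>i<N. 0 \<le> z i \<and> z i \<le> 1 / real N" for z
    proof -
      define \<phi> where "\<phi> r = Complex (z (2*r)) (z (2*r+1))" for r
      have "(\<Sum>r<2^n. (cmod (\<phi> r))\<^sup>2) \<le> 1"
        unfolding \<phi>_def using that by (intro sum_cmod_sq_small_coords) (auto simp: N_def)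
      then obtain x where x: "\<forall>j. \<bar>x j\<bar> \<le> pi" "\<forall>r<2^n. scaled_state n ps x r = \<phi> r"
        using scaled_state_onto_ball[OF wf prep] unfolding ps_def by blast
      have "h x i = z i" if "i < N" for i
        using that x(2) by (auto simp: h_def \<phi>_def N_def elim!: evenE oddE)
      then show ?thesis using x(1) by blast
    qed
  qed (use \<open>K < N\<close> \<open>0 \<le> L\<close> in \<open>auto simp: N_def\<close>)
qed

theorem mainTheorem2:
  fixes n :: nat and gs :: "gate list"
  assumes "n \<ge> 1"
    and "\<forall>g\<in>set gs. wf_gate n g"
    and "\<forall>\<psi>. unit_state n \<psi> \<longrightarrow>
           (\<exists>x. length x = num_params gs \<and>
              (\<exists>c::complex. cmod c = 1 \<and>
                 circ n gs x *\<^sub>v unit_vec (2^n) 0 = c \<cdot>\<^sub>v \<psi>))"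
  shows "real (num_ms gs) \<ge>
           of_int \<lceil>(2 ^ (n+1) - 2 * real n - 2) / (2 * real n + 1)\<rceil>"
  using ms_count_bound_from_param_count[OF assms(1) state_dimension_le_angle_count[OF assms(2,3)]] .

end
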